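(* Let $k\ge 0$ be an integer and $d=2\cdot 2^{2k}$. Let $r$ be an odd positive integer with $r\ge\lceil\sqrt d\,\rceil$, and put $n=2^k r$ and $$a=2n+d=2\cdot2^k r+2\cdot 2^{2k},\qquad b=2n+\frac{2n^2}{d}=2\cdot 2^k r+r^2,\qquad c=b+d=2\cdot2^kr+r^2+2\cdot2^{2k}.$$ Then $(a,b,c)$ is an IDPT. Moreover, every IDPT $(a,b,c)$ with $c-b=2\cdot 2^{2k}$ arises in this way from some such $r$.
   Context: A Diophantine Pythagorean Triangle (DPT) is a triple $(a,b,c)$ of positive integers with $a<b<c$ and $a^2+b^2=c^2$. An IDPT is a DPT with $\gcd(a,b,c)=1$. $\lceil x\rceil$ is the smallest integer $\ge x$. *)

theory Defs
  imports Complex_Main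
begin

definition DPT :: "nat \<Rightarrow> nat \<Rightarrow> nat \<Rightarrow> bool" where
  "DPT a b c \<longleftrightarrow> 0 < a \<and> a < b \<and> b < c \<and> a^2 + b^2 = c^2"

definition IDPT :: "nat \<Rightarrow> nat \<Rightarrow> nat \<Rightarrow> bool" where
  "IDPT a b c \<longleftrightarrow> DPT a b c \<and> gcd a (gcd b c) = 1"

end

theory Submission
  imports Defs
begin

text \<open>Writing \<open>m = 2\<^sup>k\<close>, the triple is Euclid's \<open>(2uv, u\<^sup>2 - v\<^sup>2, u\<^sup>2 + v\<^sup>2)\<close> with
  \<open>u = r + m\<close>, \<open>v = m\<close>, so \<open>c - b = 2m\<^sup>2\<close>. It is primitive because \<open>b = r (r + 2m)\<close> is odd
  and coprime to \<open>m\<close>, hence coprime to \<open>c - b\<close>. Conversely, \<open>c - b = 2m\<^sup>2\<close> gives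
  \<open>a\<^sup>2 = (c - b)(c + b) = (2m)\<^sup>2 (b + m\<^sup>2)\<close>, so \<open>a = 2mt\<close> with \<open>t\<^sup>2 = b + m\<^sup>2\<close>; then
  \<open>r = t - m\<close> recovers the parametrisation, and \<open>r\<close> is odd since otherwise \<open>a\<close>, \<open>b\<close>, \<open>c\<close>
  would all be even.\<close>

lemma pythagorean_param:
  fixes m r :: nat
  shows "(2*m*r + 2*m^2)^2 + (2*m*r + r^2)^2 = (2*m*r + r^2 + 2*m^2)^2"
  by (simp add: power2_eq_square algebra_simps)

lemma coprime_param_leg:
  fixes m r :: nat
  assumes "odd r" and "coprime r m"
  shows "coprime (2*m*r + r^2) (2*m^2)"
proof -
  have "gcd m (2*m + r) = gcd m r"
    by (rule gcd_add_mult)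
  then have "coprime (r + 2*m) m"
    using \<open>coprime r m\<close> by (simp add: coprime_iff_gcd_eq_1 gcd.commute add.commute)
  then have "coprime (r * (r + 2*m)) (2*m^2)"
    using assms by simp
  moreover have "r * (r + 2*m) = 2*m*r + r^2"
    by (simp add: power2_eq_square algebra_simps)
  ultimately show ?thesis
    by simp
qed

lemma IDPT_param:
  fixes m r :: nat
  assumes "0 < m" and "odd r" and "coprime r m" and "2*m^2 < r^2"
  shows "IDPT (2*m*r + 2*m^2) (2*m*r + r^2) (2*m*r + r^2 + 2*m^2)"
proof -
  have "coprime (2*m*r + r^2) (2*m*r + r^2 + 2*m^2)"
    using coprime_param_leg[OF assms(2,3)] by (metis coprime_iff_gcd_eq_1 gcd_add2)
  then show ?thesis
    using \<open>0 < m\<close> \<open>2*m^2 < r^2\<close>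
    by (simp add: IDPT_def DPT_def pythagorean_param coprime_iff_gcd_eq_1)
qed

lemma IDPT_param_converse:
  fixes m a b c :: nat
  assumes "IDPT a b c" and "c - b = 2*m^2"
  obtains r where "odd r" "2*m^2 < r^2"
    "a = 2*m*r + 2*m^2" "b = 2*m*r + r^2" "c = 2*m*r + r^2 + 2*m^2"
proof -
  from assms(1) have "a < b" "b < c" "a^2 + b^2 = c^2" "gcd a (gcd b c) = 1"
    unfolding IDPT_def DPT_def by auto
  have c: "c = b + 2*m^2"
    using assms(2) \<open>b < c\<close> by simp
  have a_sq: "a^2 = (2*m)^2 * (b + m^2)"
    using \<open>a^2 + b^2 = c^2\<close> c by (simp add: power2_eq_square algebra_simps)
  then have "2*m dvd a"
    using pow_divides_pow_iff[of 2 "2*m" a] by simp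
  then obtain t where t: "a = 2*m*t"
    by blast
  have "m > 0"
    using \<open>b < c\<close> c by (cases "m = 0") auto
  then have t_sq: "t^2 = b + m^2"
    using a_sq t by (simp add: power_mult_distrib)
  then have "m^2 < t^2"
    using \<open>a < b\<close> by simp
  then have "m < t"
    by (rule power_less_imp_less_base) simp
  define r where "r = t - m"
  have "t = r + m"
    using \<open>m < t\<close> by (simp add: r_def)
  then have a: "a = 2*m*r + 2*m^2" and b: "b = 2*m*r + r^2"
    using t t_sq by (simp_all add: power2_eq_square algebra_simps)
  have "odd r"
  proof
    assume "even r"
    then have "2 dvd gcd a (gcd b c)"
      using a b c by simp
    then show False
      using \<open>gcd a (gcd b c) = 1\<close> by simp
  qed
  moreover have "2*m^2 < r^2"
    using \<open>a < b\<close> a b by simp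
  ultimately show ?thesis
    using that a b c by simp
qed

lemma ceiling_sqrt_le_iff:
  fixes d r :: nat
  shows "\<lceil>sqrt (real d)\<rceil> \<le> int r \<longleftrightarrow> d \<le> r^2"
proof -
  have "\<lceil>sqrt (real d)\<rceil> \<le> int r \<longleftrightarrow> sqrt (real d) \<le> sqrt (real (r^2))"
    by (simp add: ceiling_le_iff)
  then show ?thesis
    by (simp only: real_sqrt_le_iff of_nat_le_iff)
qed

theorem theorem2:
  fixes k :: nat
  defines "d \<equiv> 2 * 2^(2*k)"
  shows "(\<forall>r::nat. odd r \<and> 0 < r \<and> \<lceil>sqrt (real d)\<rceil> \<le> int r \<longrightarrow>
            IDPT (2 * 2^k * r + 2 * 2^(2*k)) (2 * 2^k * r + r^2) (2 * 2^k * r + r^2 + 2 * 2^(2*k)))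
       \<and> (\<forall>a b c. IDPT a b c \<and> c - b = d \<longrightarrow>
            (\<exists>r::nat. odd r \<and> 0 < r \<and> \<lceil>sqrt (real d)\<rceil> \<le> int r \<and>
               a = 2 * 2^k * r + 2 * 2^(2*k) \<and> b = 2 * 2^k * r + r^2 \<and>
               c = 2 * 2^k * r + r^2 + 2 * 2^(2*k)))"
proof -
  define m :: nat where "m = 2^k"
  have pow_2k: "(2::nat)^(2*k) = m^2"
    unfolding m_def by (simp add: power_mult[symmetric] mult.commute)
  have bound: "\<lceil>sqrt (real d)\<rceil> \<le> int r \<longleftrightarrow> 2*m^2 < r^2" if "odd r" for r :: nat
  proof -
    have "2*m^2 \<noteq> r^2"
      using that by (auto dest: arg_cong[where f = even])
    then show ?thesis
      unfolding ceiling_sqrt_le_iff d_def pow_2k by auto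
  qed
  have "0 < m"
    unfolding m_def by simp
  have coprime: "coprime r m" if "odd r" for r :: nat
    using that unfolding m_def by simp
  show ?thesis
    unfolding pow_2k m_def[symmetric]
  proof (intro conjI allI impI)
    fix r :: nat
    assume "odd r \<and> 0 < r \<and> \<lceil>sqrt (real d)\<rceil> \<le> int r"
    then show "IDPT (2*m*r + 2*m^2) (2*m*r + r^2) (2*m*r + r^2 + 2*m^2)"
      using IDPT_param[OF \<open>0 < m\<close>] bound coprime by blast
  next
    fix a b c
    assume "IDPT a b c \<and> c - b = d"
    then obtain r where "odd r" "2*m^2 < r^2" "a = 2*m*r + 2*m^2" "b = 2*m*r + r^2"
        "c = 2*m*r + r^2 + 2*m^2"
      using IDPT_param_converse[of a b c m] unfolding d_def pow_2k by blast
    then show "\<exists>r. odd r \<and> 0 < r \<and> \<lceil>sqrt (real d)\<rceil> \<le> int r \<and>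
        a = 2*m*r + 2*m^2 \<and> b = 2*m*r + r^2 \<and> c = 2*m*r + r^2 + 2*m^2"
      using bound by (intro exI[of _ r]) (auto intro: odd_pos)
  qed
qed

end
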